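(* Let $N\in\mathbb{N}$ and $\Lambda\subseteq P_N$. (i) If $\{(W_n,A_n,\Theta_n)\}_{n\in\mathbb{N}}$ is a sequence in $\mathbb{D}_N$ converging to $(w,a,\theta)\in\mathcal{D}_N$, then $\lim_{n\to\infty}\pi_\Lambda(W_n,A_n,\Theta_n)=\pi_\Lambda(w,a,\theta)$. (ii) The set $\mathcal{D}_N$ is path-connected and contains $\mathcal{T}_N^+$. Furthermore, if $N\ge1$, its interior is $\mathcal{D}_N^\circ=\{(w,a,\theta)\in\mathcal{D}_N:a^{-1}[0]=\emptyset\}$, and it decomposes into $2^N$ simply-connected components $\mathcal{D}^\circ_{N,\Lambda}:=\{(w,a,\theta)\in\mathcal{D}_N^\circ:a^{-1}[-\mathcal{C}]=\Lambda\}$, $\Lambda\subseteq P_N$.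
   Context: $\mathbb{N}=\{0,1,\dots\}$, $P_N=\{1,\dots,N\}$ ($P_0=\emptyset$); vectors are functions on $P_N$, $v^{-1}[S]=\{\ell:v_\ell\in S\}$, $\mathrm{Tr}(v,\Lambda):=\sum_{\ell\in\Lambda}v_\ell$, $N(\Lambda):=N-|\Lambda|$. $\mathcal{C}:=\{z:\mathrm{Re}(z)>0\text{ or }z\in i\mathbb{R}_{>0}\}$, $\mathcal{C}^\circ$ the open right half-plane. For $N\ge1$: $\mathbb{D}_N:=\{(w,a,\theta)\in\mathbb{C}\times\mathbb{C}^N\times\mathbb{R}^N:a^{-1}[0]\subseteq\theta^{-1}[\mathbb{R}\smallsetminus\mathbb{Z}]\}$, $\pi(w,a,\theta):=w-\mathrm{Tr}(a,a^{-1}[-\mathcal{C}])$, $\mathcal{D}_N:=\{(w,a,\theta)\in\mathbb{D}_N:\pi(w,a,\theta)\in\mathcal{C}^\circ,\ a_\ell\notin i\mathbb{R}\smallsetminus\{0\}\ \forall\ell\}$, $\mathcal{T}_N^+:=\{(w,a,\theta):\mathrm{Re}(w)>0,\mathrm{Re}(a_\ell)>0\ \forall\ell\}$. For $N=0$: $\mathbb{D}_0=\mathbb{C}$, $\mathcal{D}_0=\mathcal{T}_0^+=\{w:\mathrm{Re}(w)>0\}$. Projections $\pi_\Lambda:\mathbb{D}_N\to\mathbb{D}_{N(\Lambda)}$: identity if $\Lambda=\emptyset$; $\pi$ if $\Lambda=P_N\ne\emptyset$; otherwise $\pi_\Lambda(w,a,\theta):=(w-\mathrm{Tr}(a,\Lambda\cap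 a^{-1}[-\mathcal{C}]),a\circ\varphi,\theta\circ\varphi)$ with $\varphi$ the strictly increasing bijection $P_{N(\Lambda)}\to P_N\smallsetminus\Lambda$. *)

theory Defs
  imports "HOL-Analysis.Analysis"
begin

(* Points (w,a,theta) of C x C^N x R^N are represented as elements of
   complex \<times> (nat \<Rightarrow> complex) \<times> (nat \<Rightarrow> real), where the vectors a, theta
   are indexed by P_N = {1..N} and are 0 at all indices outside P_N.
   The ambient space C x C^N x R^N is the set ambient N below (with the
   product topology, which coincides with the Euclidean topology there). *)

type_synonym pt = "complex \<times> (nat \<Rightarrow> complex) \<times> (nat \<Rightarrow> real)"

definition PN :: "nat \<Rightarrow> nat set" where
  "PN N = {1..N}"

definition ambient :: "nat \<Rightarrow> pt set" where
  "ambient N = {(w,a,\<theta>). \<forall>l. l \<notin> PN N \<longrightarrow> a l = 0 \<and> \<theta> l = 0}"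

definition Trc :: "(nat \<Rightarrow> complex) \<Rightarrow> nat set \<Rightarrow> complex" where
  "Trc v \<Lambda> = (\<Sum>l\<in>\<Lambda>. v l)"

definition Nrem :: "nat \<Rightarrow> nat set \<Rightarrow> nat" where
  "Nrem N \<Lambda> = N - card \<Lambda>"

definition Cset :: "complex set" where
  "Cset = {z. Re z > 0 \<or> (Re z = 0 \<and> Im z > 0)}"

definition Cint :: "complex set" where
  "Cint = {z. Re z > 0}"

definition negC_idx :: "nat \<Rightarrow> (nat \<Rightarrow> complex) \<Rightarrow> nat set" where
  "negC_idx N a = {l \<in> PN N. a l \<in> uminus ` Cset}"

definition DD :: "nat \<Rightarrow> pt set" where
  "DD N = {(w,a,\<theta>) \<in> ambient N. \<forall>l \<in> PN N. a l = 0 \<longrightarrow> \<theta> l \<notin> \<int>}"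

definition piN :: "nat \<Rightarrow> pt \<Rightarrow> complex" where
  "piN N x = (case x of (w,a,\<theta>) \<Rightarrow> w - Trc a (negC_idx N a))"

definition Dset :: "nat \<Rightarrow> pt set" where
  "Dset N = {(w,a,\<theta>) \<in> DD N. piN N (w,a,\<theta>) \<in> Cint \<and>
        (\<forall>l \<in> PN N. \<not> (Re (a l) = 0 \<and> a l \<noteq> 0))}"

definition Tplus :: "nat \<Rightarrow> pt set" where
  "Tplus N = {(w,a,\<theta>) \<in> ambient N. Re w > 0 \<and> (\<forall>l \<in> PN N. Re (a l) > 0)}"

(* the strictly increasing bijection P_{N(\<Lambda>)} \<rightarrow> P_N - \<Lambda> *)
definition phi :: "nat \<Rightarrow> nat set \<Rightarrow> nat \<Rightarrow> nat" where
  "phi N \<Lambda> j = sorted_list_of_set (PN N - \<Lambda>) ! (j - 1)"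

definition piL :: "nat \<Rightarrow> nat set \<Rightarrow> pt \<Rightarrow> pt" where
  "piL N \<Lambda> x = (case x of (w,a,\<theta>) \<Rightarrow>
     if \<Lambda> = {} then (w,a,\<theta>)
     else if \<Lambda> = PN N then (piN N (w,a,\<theta>), (\<lambda>_. 0), (\<lambda>_. 0))
     else (w - Trc a (\<Lambda> \<inter> negC_idx N a),
           (\<lambda>j. if j \<in> PN (Nrem N \<Lambda>) then a (phi N \<Lambda> j) else 0),
           (\<lambda>j. if j \<in> PN (Nrem N \<Lambda>) then \<theta> (phi N \<Lambda> j) else 0)))"

definition Dint :: "nat \<Rightarrow> pt set" where
  "Dint N = (subtopology euclidean (ambient N)) interior_of (Dset N)"

definition DintL :: "nat \<Rightarrow> nat set \<Rightarrow> pt set" where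
  "DintL N \<Lambda> = {(w,a,\<theta>) \<in> Dint N. negC_idx N a = \<Lambda>}"

end

theory Submission
  imports Defs
begin

(* Write pi(w,a,theta) = w - sum_l n(a_l), where n(z) = z for z in -C and n(z) = 0 otherwise.
   n is continuous at 0 and off the imaginary axis, and D_N has no coordinate a_l in iR - {0};
   hence pi and every pi_Lambda are continuous at the points of D_N.
   Where all a_l are nonzero, membership in D_N only depends on the sign pattern of Re a and on
   Re w exceeding the sum of the negative Re a_l, so this set is the disjoint union of 2^N convex,
   relatively open sectors, which are its components.  It is the interior of D_N because a point
   with a_l = 0 is a limit of points with a_l in iR - {0}.
   For path-connectedness, shifting w and letting Im a go to 0 stays in D_N and reaches a point
   with real a and Re w > 0; there the condition on pi holds automatically, and a_l may pass
   through 0 once theta_l has been moved to 1/2. *)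

lemma tendsto_fun_iff:
  "((X :: 'a \<Rightarrow> 'b \<Rightarrow> 'c::topological_space) \<longlongrightarrow> f) F \<longleftrightarrow> (\<forall>i. ((\<lambda>n. X n i) \<longlongrightarrow> f i) F)"
  using limitin_componentwise[of "\<lambda>_. euclidean" UNIV X f F]
  by (simp add: euclidean_product_topology)

lemma components_openin_unique:
  fixes S :: "'a::topological_space set"
  assumes disj: "pairwise disjnt \<A>" and S: "\<Union>\<A> = S"
    and \<A>: "\<And>C. C \<in> \<A> \<Longrightarrow> openin (top_of_set S) C \<and> connected C \<and> C \<noteq> {}"
  shows "components S = \<A>"
proof -
  have comp: "C \<in> components S" if C: "C \<in> \<A>" for C
    unfolding in_components_maximal
  proof (intro conjI allI impI)
    show "C \<noteq> {}" "connected C" "C \<subseteq> S" using \<A>[OF C] S C by auto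
    fix D assume D: "D \<noteq> {} \<and> C \<subseteq> D \<and> D \<subseteq> S \<and> connected D"
    have "S - C = \<Union>(\<A> - {C})"
      using disj C S by (auto simp: pairwise_def disjnt_def)
    then have "closedin (top_of_set S) C"
      using \<A> \<open>C \<subseteq> S\<close> unfolding closedin_def by (auto intro: openin_Union)
    then have "D \<subseteq> C \<or> disjnt D C"
      using connectedin_clopen_cases[of "top_of_set S" D C] D \<A>[OF C]
      by (simp add: connectedin_subtopology)
    then show "D = C" using D \<open>C \<noteq> {}\<close> by (auto simp: disjnt_def)
  qed
  have "K \<in> \<A>" if K: "K \<in> components S" for K
  proof -
    obtain x where "x \<in> K" using K in_components_nonempty by blast
    then obtain C where "C \<in> \<A>" "x \<in> C" using K S in_components_subset by blast
    then show ?thesis using components_eq[OF K comp] \<open>x \<in> K\<close> by blast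
  qed
  then show ?thesis using comp by blast
qed

lemma convex_comb_gt:
  fixes c x y t :: real
  assumes "c < x" "c < y" "t \<in> {0..1}"
  shows "c < (1 - t) * x + t * y"
  using convex_bound_lt[of "-x" "-c" "-y" "1 - t" t] assms by simp

lemma finite_PN [simp]: "finite (PN N)"
  by (simp add: PN_def)

(* pt carries no real vector space structure in the library (there is no scaleR on function
   spaces), so segments and convexity are defined coordinatewise. *)
definition pt_linepath :: "pt \<Rightarrow> pt \<Rightarrow> real \<Rightarrow> pt" where
  "pt_linepath x y t = ((1 - t) *\<^sub>R fst x + t *\<^sub>R fst y,
      \<lambda>l. (1 - t) *\<^sub>R fst (snd x) l + t *\<^sub>R fst (snd y) l,
      \<lambda>l. (1 - t) * snd (snd x) l + t * snd (snd y) l)"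

lemma continuous_on_pt_linepath [continuous_intros]:
  assumes "continuous_on S f" "continuous_on S g" "continuous_on S c"
  shows "continuous_on S (\<lambda>z. pt_linepath (f z) (g z) (c z))"
  unfolding pt_linepath_def
  by (intro continuous_intros continuous_on_coordinatewise_then_product assms
      continuous_on_product_then_coordinatewise)

lemma pt_linepath_0 [simp]: "pt_linepath x y 0 = x"
  and pt_linepath_1 [simp]: "pt_linepath x y 1 = y"
  by (auto simp: pt_linepath_def prod_eq_iff)

lemma path_component_pt_linepath:
  assumes "\<And>t. t \<in> {0..1} \<Longrightarrow> pt_linepath x y t \<in> S"
  shows "path_component S x y"
  unfolding path_component_def
proof (intro exI conjI)
  show "path (pt_linepath x y)"
    unfolding path_def by (intro continuous_intros)
  show "path_image (pt_linepath x y) \<subseteq> S"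
    using assms by (auto simp: path_image_def)
qed (auto simp: pathstart_def pathfinish_def)

definition pt_convex :: "pt set \<Rightarrow> bool" where
  "pt_convex S \<longleftrightarrow> (\<forall>x\<in>S. \<forall>y\<in>S. \<forall>t\<in>{0..1}. pt_linepath x y t \<in> S)"

lemma pt_convex_imp_path_connected: "pt_convex S \<Longrightarrow> path_connected S"
  unfolding path_connected_component pt_convex_def
  by (auto intro: path_component_pt_linepath)

lemma pt_convex_imp_simply_connected:
  assumes "pt_convex S"
  shows "simply_connected S"
  unfolding simply_connected_def homotopic_loops
proof (intro allI impI)
  fix p q :: "real \<Rightarrow> pt"
  assume pq: "path p \<and> pathfinish p = pathstart p \<and> path_image p \<subseteq> S \<and>
              path q \<and> pathfinish q = pathstart q \<and> path_image q \<subseteq> S"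
  define h where "h z = pt_linepath (p (snd z)) (q (snd z)) (fst z)" for z :: "real \<times> real"
  have snd_01: "snd ` ({0..1} \<times> {0..1}) \<subseteq> {0..1::real}" by auto
  have "continuous_on ({0..1} \<times> {0..1}) (\<lambda>z::real \<times> real. r (snd z))"
    if "path r" for r :: "real \<Rightarrow> pt"
    using continuous_on_compose2[OF that[unfolded path_def] continuous_on_snd[OF continuous_on_id]
        snd_01] .
  then have "continuous_on ({0..1} \<times> {0..1}) h"
    unfolding h_def using pq by (intro continuous_intros) auto
  moreover have "h \<in> {0..1} \<times> {0..1} \<rightarrow> S"
    using assms pq unfolding pt_convex_def h_def path_image_def by (auto simp: image_subset_iff)
  moreover have "\<forall>x\<in>{0..1}. h (0, x) = p x" "\<forall>x\<in>{0..1}. h (1, x) = q x"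
    "\<forall>t\<in>{0..1}. pathfinish (h \<circ> Pair t) = pathstart (h \<circ> Pair t)"
    using pq by (simp_all add: h_def pathfinish_def pathstart_def)
  ultimately show "\<exists>h :: real \<times> real \<Rightarrow> pt. continuous_on ({0..1} \<times> {0..1}) h \<and>
      h \<in> {0..1} \<times> {0..1} \<rightarrow> S \<and>
      (\<forall>x\<in>{0..1}. h (0, x) = p x) \<and> (\<forall>x\<in>{0..1}. h (1, x) = q x) \<and>
      (\<forall>t\<in>{0..1}. pathfinish (h \<circ> Pair t) = pathstart (h \<circ> Pair t))"
    by blast
qed

lemma uminus_Cset_iff: "z \<in> uminus ` Cset \<longleftrightarrow> Re z < 0 \<or> (Re z = 0 \<and> Im z < 0)"
proof
  assume "Re z < 0 \<or> (Re z = 0 \<and> Im z < 0)"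
  then have "-z \<in> Cset" by (auto simp: Cset_def)
  then show "z \<in> uminus ` Cset" by (metis image_eqI minus_minus)
qed (auto simp: Cset_def)

definition negC_part :: "complex \<Rightarrow> complex" where
  "negC_part z = (if z \<in> uminus ` Cset then z else 0)"

lemma Re_negC_part: "Re (negC_part z) = min (Re z) 0"
  by (auto simp: negC_part_def uminus_Cset_iff)

lemma isCont_negC_part:
  assumes "z = 0 \<or> Re z \<noteq> 0"
  shows "isCont negC_part z"
proof -
  consider "z = 0" | "Re z > 0" | "Re z < 0" using assms by linarith
  then show ?thesis
  proof cases
    case 1
    have "(negC_part \<longlongrightarrow> 0) (at 0)"
      by (rule Lim_null_comparison[of _ norm])
        (auto simp: negC_part_def intro: tendsto_norm_zero[OF tendsto_ident_at, simplified])
    then show ?thesis using 1 by (simp add: isCont_def negC_part_def)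
  next
    case 2
    have "\<forall>\<^sub>F y in nhds z. negC_part y = 0"
      using eventually_nhds_in_open[of "{y. Re y > 0}" z] 2
      by (auto simp: open_halfspace_Re_gt negC_part_def uminus_Cset_iff elim!: eventually_mono)
    then show ?thesis by (simp add: isCont_cong)
  next
    case 3
    have "\<forall>\<^sub>F y in nhds z. negC_part y = y"
      using eventually_nhds_in_open[of "{y. Re y < 0}" z] 3
      by (auto simp: open_halfspace_Re_lt negC_part_def uminus_Cset_iff elim!: eventually_mono)
    then show ?thesis by (simp add: isCont_cong)
  qed
qed

lemma Trc_Int_negC_idx:
  assumes "S \<subseteq> PN N"
  shows "Trc a (S \<inter> negC_idx N a) = (\<Sum>l\<in>S. negC_part (a l))"
proof -
  have "finite S" using assms by (rule finite_subset) simp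
  moreover have "S \<inter> negC_idx N a = {l\<in>S. a l \<in> uminus ` Cset}"
    using assms by (auto simp: negC_idx_def)
  ultimately show ?thesis
    by (simp add: Trc_def negC_part_def sum.inter_filter)
qed

lemma piN_eq_sum_negC_part: "piN N (w, a, \<theta>) = w - (\<Sum>l\<in>PN N. negC_part (a l))"
  using Trc_Int_negC_idx[of "PN N" N a] by (simp add: piN_def negC_idx_def Int_absorb1)

lemma Re_piN: "Re (piN N (w, a, \<theta>)) = Re w - (\<Sum>l\<in>PN N. min (Re (a l)) 0)"
  by (simp add: piN_eq_sum_negC_part Re_negC_part)

lemma tendsto_piL:
  assumes \<Lambda>: "\<Lambda> \<subseteq> PN N" and x: "x \<in> Dset N" and X: "(X \<longlongrightarrow> x) F"
  shows "((\<lambda>n. piL N \<Lambda> (X n)) \<longlongrightarrow> piL N \<Lambda> x) F"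
proof -
  obtain w a \<theta> where x_eq: "x = (w, a, \<theta>)" using prod_cases3 by blast
  define W A T where "W = (\<lambda>n. fst (X n))" and "A = (\<lambda>n. fst (snd (X n)))"
    and "T = (\<lambda>n. snd (snd (X n)))"
  have X_eq: "X = (\<lambda>n. (W n, A n, T n))" by (simp add: W_def A_def T_def)
  have W: "(W \<longlongrightarrow> w) F" and A: "(A \<longlongrightarrow> a) F" and T: "(T \<longlongrightarrow> \<theta>) F"
    using tendsto_fst[OF X] tendsto_fst[OF tendsto_snd[OF X]] tendsto_snd[OF tendsto_snd[OF X]]
    by (simp_all add: W_def A_def T_def x_eq)
  have A_l: "((\<lambda>n. A n l) \<longlongrightarrow> a l) F" and T_l: "((\<lambda>n. T n l) \<longlongrightarrow> \<theta> l) F" for l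
    using A T unfolding tendsto_fun_iff by blast+
  have "a l = 0 \<or> Re (a l) \<noteq> 0" for l
    using x by (cases "l \<in> PN N") (auto simp: x_eq Dset_def DD_def ambient_def)
  then have negC: "((\<lambda>n. negC_part (A n l)) \<longlongrightarrow> negC_part (a l)) F" for l
    using isCont_tendsto_compose[OF isCont_negC_part A_l] by blast
  have "((\<lambda>n. Trc (A n) (\<Lambda> \<inter> negC_idx N (A n))) \<longlongrightarrow> Trc a (\<Lambda> \<inter> negC_idx N a)) F"
    unfolding Trc_Int_negC_idx[OF \<Lambda>] by (intro tendsto_sum negC)
  moreover have "((\<lambda>n. piN N (W n, A n, T n)) \<longlongrightarrow> piN N (w, a, \<theta>)) F"
    unfolding piN_eq_sum_negC_part by (intro tendsto_intros W negC)
  moreover have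
    "((\<lambda>n j. if j \<in> PN (Nrem N \<Lambda>) then A n (phi N \<Lambda> j) else 0) \<longlongrightarrow>
        (\<lambda>j. if j \<in> PN (Nrem N \<Lambda>) then a (phi N \<Lambda> j) else 0)) F"
    "((\<lambda>n j. if j \<in> PN (Nrem N \<Lambda>) then T n (phi N \<Lambda> j) else 0) \<longlongrightarrow>
        (\<lambda>j. if j \<in> PN (Nrem N \<Lambda>) then \<theta> (phi N \<Lambda> j) else 0)) F"
    unfolding tendsto_fun_iff by (auto intro: A_l T_l)
  ultimately show ?thesis
    unfolding X_eq x_eq piL_def using W A T by (auto intro!: tendsto_intros)
qed

lemma Re_piN_ge: "Re w \<le> Re (piN N (w, a, \<theta>))"
  unfolding Re_piN by (simp add: sum_nonpos)

lemma Dset_Re_eq_0: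
  assumes "(w, a, \<theta>) \<in> Dset N" "l \<in> PN N" "Re (a l) = 0"
  shows "a l = 0" "\<theta> l \<notin> \<int>"
  using assms by (auto simp: Dset_def DD_def)

lemma Tplus_subset_Dset: "Tplus N \<subseteq> Dset N"
proof safe
  fix w a \<theta> assume x: "(w, a, \<theta>) \<in> Tplus N"
  then have "(\<Sum>l\<in>PN N. min (Re (a l)) 0) = 0" by (simp add: Tplus_def)
  then show "(w, a, \<theta>) \<in> Dset N"
    using x by (force simp: Tplus_def Dset_def DD_def Cint_def Re_piN)
qed

definition real_slice :: "nat \<Rightarrow> pt set" where
  "real_slice N = {(w, a, \<theta>) \<in> ambient N. 0 < Re w \<and>
      (\<forall>l\<in>PN N. Im (a l) = 0 \<and> (a l = 0 \<longrightarrow> \<theta> l \<notin> \<int>))}"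

lemma real_slice_subset_Dset: "real_slice N \<subseteq> Dset N"
proof safe
  fix w a \<theta> assume x: "(w, a, \<theta>) \<in> real_slice N"
  then have "Re (piN N (w, a, \<theta>)) > 0"
    using Re_piN_ge[of w N a \<theta>] by (simp add: real_slice_def)
  then show "(w, a, \<theta>) \<in> Dset N"
    using x by (auto simp: real_slice_def Dset_def DD_def Cint_def complex_eq_iff)
qed

definition base_point :: "nat \<Rightarrow> pt" where
  "base_point N = (1, \<lambda>l. if l \<in> PN N then 1 else 0, \<lambda>l. if l \<in> PN N then 1/2 else 0)"

lemma path_component_real_slice_base_point:
  assumes x: "x \<in> real_slice N"
  shows "path_component (real_slice N) x (base_point N)"
proof -
  obtain w a \<theta> where x_eq: "x = (w, a, \<theta>)" using prod_cases3 by blast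
  define a' where "a' l = (if l \<in> PN N \<and> a l = 0 then 1 else a l)" for l
  define y where "y = (w, a', snd (snd (base_point N)))"
  have "path_component (real_slice N) x y"
  proof (rule path_component_pt_linepath)
    fix t :: real assume "t \<in> {0..1}"
    then show "pt_linepath x y t \<in> real_slice N"
      using x by (auto simp: x_eq y_def a'_def base_point_def pt_linepath_def real_slice_def
          ambient_def scaleR_conv_of_real algebra_simps)
  qed
  moreover have "path_component (real_slice N) y (base_point N)"
  proof (rule path_component_pt_linepath)
    fix t :: real assume "t \<in> {0..1}"
    then show "pt_linepath y (base_point N) t \<in> real_slice N"
      using x convex_comb_gt[of 0 "Re w" 1 t]
      by (auto simp: x_eq y_def a'_def base_point_def pt_linepath_def real_slice_def
          ambient_def scaleR_conv_of_real algebra_simps)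
  qed
  ultimately show ?thesis by (rule path_component_trans)
qed

lemma path_component_Dset_real_slice:
  assumes x: "x \<in> Dset N"
  obtains y where "y \<in> real_slice N" "path_component (Dset N) x y"
proof -
  obtain w a \<theta> where x_eq: "x = (w, a, \<theta>)" using prod_cases3 by blast
  define R where "R = \<bar>Re w\<bar> + 1"
  define y where "y = (w + of_real R, \<lambda>l. complex_of_real (Re (a l)), \<theta>)"
  have amb: "x \<in> ambient N" and Re_pi: "Re (piN N x) > 0"
    using x by (auto simp: Dset_def DD_def Cint_def x_eq)
  have "y \<in> real_slice N"
    using amb Dset_Re_eq_0[OF x[unfolded x_eq]]
    by (auto simp: y_def R_def real_slice_def ambient_def x_eq)
  moreover have "path_component (Dset N) x y"
  proof (rule path_component_pt_linepath)
    fix t :: real assume t: "t \<in> {0..1}"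
    \<comment> \<open>Re a is constant along the segment, so by Re_piN the real part of pi only grows.\<close>
    define a\<^sub>t where "a\<^sub>t = (\<lambda>l. (1 - t) *\<^sub>R a l + t *\<^sub>R complex_of_real (Re (a l)))"
    have Re_a\<^sub>t: "Re (a\<^sub>t l) = Re (a l)" for l
      by (simp add: a\<^sub>t_def algebra_simps)
    have a\<^sub>t_eq_0: "a\<^sub>t l = 0 \<longleftrightarrow> a l = 0" if "l \<in> PN N" for l
    proof
      assume "a\<^sub>t l = 0"
      then have "Re (a l) = 0" using Re_a\<^sub>t[of l] by simp
      then show "a l = 0" by (rule Dset_Re_eq_0(1)[OF x[unfolded x_eq] that])
    qed (simp add: a\<^sub>t_def)
    have "Re (piN N (w + of_real (t * R), a\<^sub>t, \<theta>)) = Re (piN N x) + t * R"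
      by (simp add: Re_piN Re_a\<^sub>t x_eq)
    moreover have "0 \<le> t * R" using t by (simp add: R_def)
    ultimately have "Re (piN N (w + of_real (t * R), a\<^sub>t, \<theta>)) > 0" using Re_pi by linarith
    moreover have "pt_linepath x y t = (w + of_real (t * R), a\<^sub>t, \<theta>)"
      by (simp add: pt_linepath_def x_eq y_def a\<^sub>t_def scaleR_conv_of_real algebra_simps)
    ultimately show "pt_linepath x y t \<in> Dset N"
      using amb Dset_Re_eq_0[OF x[unfolded x_eq]] Re_a\<^sub>t a\<^sub>t_eq_0
      by (auto simp: Dset_def DD_def Cint_def ambient_def x_eq a\<^sub>t_def)
  qed
  ultimately show ?thesis by (rule that)
qed

lemma path_connected_Dset: "path_connected (Dset N)"
proof -
  have "path_component (Dset N) x (base_point N)" if x: "x \<in> Dset N" for x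
  proof -
    obtain y where "y \<in> real_slice N" "path_component (Dset N) x y"
      using path_component_Dset_real_slice[OF x] .
    then show ?thesis
      using path_component_real_slice_base_point real_slice_subset_Dset
      by (meson path_component_of_subset path_component_trans)
  qed
  then show ?thesis
    unfolding path_connected_component by (meson path_component_sym path_component_trans)
qed

definition sector :: "nat \<Rightarrow> nat set \<Rightarrow> pt set" where
  "sector N M = {(w, a, \<theta>). (\<forall>l\<in>M. Re (a l) < 0) \<and> (\<forall>l\<in>PN N - M. 0 < Re (a l)) \<and>
      (\<Sum>l\<in>M. Re (a l)) < Re w}"

lemma open_sector:
  assumes "finite M"
  shows "open (sector N M)"
proof -
  have Re_a: "continuous_on UNIV (\<lambda>x::pt. Re (fst (snd x) l))" for l
    by (intro continuous_intros continuous_on_product_then_coordinatewise)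
  have "sector N M = (\<Inter>l\<in>M. {x. Re (fst (snd x) l) < 0}) \<inter>
      (\<Inter>l\<in>PN N - M. {x. 0 < Re (fst (snd x) l)}) \<inter> {x. (\<Sum>l\<in>M. Re (fst (snd x) l)) < Re (fst x)}"
    by (auto simp: sector_def)
  also have "open \<dots>"
    using assms by (intro open_Int open_INT open_Collect_less Re_a continuous_intros ballI) auto
  finally show ?thesis .
qed

lemma sector_Re_sign:
  assumes "(w, a, \<theta>) \<in> sector N M" "l \<in> PN N"
  shows "Re (a l) \<noteq> 0" and "Re (a l) < 0 \<longleftrightarrow> l \<in> M"
  using assms by (cases "l \<in> M"; force simp: sector_def)+

lemma sectors_disjoint:
  assumes "M \<subseteq> PN N" "M' \<subseteq> PN N" "M \<noteq> M'"
  shows "sector N M \<inter> sector N M' = {}"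
proof -
  have "M = M'" if "(w, a, \<theta>) \<in> sector N M" "(w, a, \<theta>) \<in> sector N M'" for w a \<theta>
    using sector_Re_sign(2)[OF that(1)] sector_Re_sign(2)[OF that(2)] assms(1,2) by blast
  then show ?thesis using assms(3) by auto
qed

lemma negC_idx_Re_nonzero:
  assumes "\<forall>l\<in>PN N. Re (a l) \<noteq> 0"
  shows "negC_idx N a = {l \<in> PN N. Re (a l) < 0}"
  using assms by (auto simp: negC_idx_def uminus_Cset_iff)

lemma Re_piN_negC_idx: "Re (piN N (w, a, \<theta>)) = Re w - (\<Sum>l\<in>negC_idx N a. Re (a l))"
  by (simp add: piN_def Trc_def)

lemma Dset_nonzero_iff_sector:
  assumes M: "M \<subseteq> PN N"
  shows "(w, a, \<theta>) \<in> Dset N \<and> (\<forall>l\<in>PN N. a l \<noteq> 0) \<and> negC_idx N a = M \<longleftrightarrow>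
    (w, a, \<theta>) \<in> ambient N \<inter> sector N M"
proof
  assume x: "(w, a, \<theta>) \<in> Dset N \<and> (\<forall>l\<in>PN N. a l \<noteq> 0) \<and> negC_idx N a = M"
  then have "\<forall>l\<in>PN N. Re (a l) \<noteq> 0" using Dset_Re_eq_0(1) by blast
  then have "M = {l \<in> PN N. Re (a l) < 0}" "\<forall>l\<in>PN N - M. 0 < Re (a l)"
    using x negC_idx_Re_nonzero[of N a] by (auto simp: not_less_iff_gr_or_eq)
  moreover have "(\<Sum>l\<in>M. Re (a l)) < Re w"
    using x Re_piN_negC_idx[of N w a \<theta>] by (auto simp: Dset_def Cint_def)
  ultimately show "(w, a, \<theta>) \<in> ambient N \<inter> sector N M"
    using x by (auto simp: sector_def Dset_def DD_def)
next
  assume x: "(w, a, \<theta>) \<in> ambient N \<inter> sector N M"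
  then have nonzero: "\<forall>l\<in>PN N. Re (a l) \<noteq> 0" using sector_Re_sign(1) by blast
  have "negC_idx N a = M"
    unfolding negC_idx_Re_nonzero[OF nonzero] using x M sector_Re_sign(2) by blast
  moreover from this have "Re (piN N (w, a, \<theta>)) > 0"
    using x Re_piN_negC_idx[of N w a \<theta>] by (simp add: sector_def)
  ultimately show "(w, a, \<theta>) \<in> Dset N \<and> (\<forall>l\<in>PN N. a l \<noteq> 0) \<and> negC_idx N a = M"
    using x nonzero by (auto simp: Dset_def DD_def Cint_def)
qed

lemma pt_convex_sector: "pt_convex (ambient N \<inter> sector N M)"
  unfolding pt_convex_def
proof (intro ballI)
  fix x y and t :: real
  assume x: "x \<in> ambient N \<inter> sector N M" and y: "y \<in> ambient N \<inter> sector N M"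
    and t: "t \<in> {0..1}"
  obtain w a \<theta> where x_eq: "x = (w, a, \<theta>)" using prod_cases3 by blast
  obtain w' a' \<theta>' where y_eq: "y = (w', a', \<theta>')" using prod_cases3 by blast
  have neg: "(1 - t) * p + t * q < 0" if "p < 0" "q < 0" for p q :: real
    using convex_bound_lt[OF that, of "1 - t" t] t by simp
  have pos: "0 < (1 - t) * p + t * q" if "0 < p" "0 < q" for p q :: real
    using convex_comb_gt[OF that t] .
  have "(1 - t) * ((\<Sum>l\<in>M. Re (a l)) - Re w) + t * ((\<Sum>l\<in>M. Re (a' l)) - Re w') < 0"
    using x y by (intro neg) (auto simp: x_eq y_eq sector_def)
  moreover have "(\<Sum>l\<in>M. (1 - t) * Re (a l) + t * Re (a' l)) =
      (1 - t) * (\<Sum>l\<in>M. Re (a l)) + t * (\<Sum>l\<in>M. Re (a' l))"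
    by (simp add: sum.distrib sum_distrib_left)
  ultimately have "(\<Sum>l\<in>M. (1 - t) * Re (a l) + t * Re (a' l)) < (1 - t) * Re w + t * Re w'"
    by (simp add: algebra_simps)
  then show "pt_linepath x y t \<in> ambient N \<inter> sector N M"
    using x y neg pos by (auto simp: pt_linepath_def sector_def ambient_def x_eq y_eq)
qed

lemma sector_nonempty:
  assumes "M \<subseteq> PN N"
  shows "ambient N \<inter> sector N M \<noteq> {}"
proof -
  define a where "a l = (if l \<in> M then -1 else if l \<in> PN N then 1 else 0 :: complex)" for l
  have "(\<Sum>l\<in>M. Re (a l)) = - real (card M)" by (simp add: a_def)
  then have "(1, a, \<lambda>_. 0) \<in> ambient N \<inter> sector N M"
    using assms by (auto simp: a_def sector_def ambient_def)
  then show ?thesis by blast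
qed

lemma Dset_nonzero_eq_Union_sectors:
  "{(w, a, \<theta>) \<in> Dset N. \<forall>l\<in>PN N. a l \<noteq> 0} = (\<Union>M\<in>Pow (PN N). ambient N \<inter> sector N M)"
proof (intro set_eqI)
  fix x :: pt
  obtain w a \<theta> where x_eq: "x = (w, a, \<theta>)" using prod_cases3 by blast
  have "negC_idx N a \<in> Pow (PN N)" by (auto simp: negC_idx_def)
  then have "(w, a, \<theta>) \<in> Dset N \<and> (\<forall>l\<in>PN N. a l \<noteq> 0) \<longleftrightarrow>
      (\<exists>M\<in>Pow (PN N). (w, a, \<theta>) \<in> Dset N \<and> (\<forall>l\<in>PN N. a l \<noteq> 0) \<and> negC_idx N a = M)"
    by blast
  also have "\<dots> \<longleftrightarrow> (\<exists>M\<in>Pow (PN N). (w, a, \<theta>) \<in> ambient N \<inter> sector N M)"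
    using Dset_nonzero_iff_sector[of _ N w a \<theta>] by blast
  finally show "x \<in> {(w, a, \<theta>) \<in> Dset N. \<forall>l\<in>PN N. a l \<noteq> 0} \<longleftrightarrow>
      x \<in> (\<Union>M\<in>Pow (PN N). ambient N \<inter> sector N M)"
    by (simp add: x_eq)
qed

lemma Dint_subset_Dset: "Dint N \<subseteq> Dset N"
  unfolding Dint_def by (rule interior_of_subset)

lemma Dint_nonzero:
  assumes x: "(w, a, \<theta>) \<in> Dint N" and l: "l \<in> PN N"
  shows "a l \<noteq> 0"
proof
  assume a_l: "a l = 0"
  have "openin (top_of_set (ambient N)) (Dint N)" by (simp add: Dint_def)
  then obtain T where T: "open T" "Dint N = ambient N \<inter> T"
    unfolding openin_open by blast
  define c where "c k = \<i> * complex_of_real (inverse (Suc k))" for k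
  have c_imag: "Re (c k) = 0" "c k \<noteq> 0" for k by (simp_all add: c_def del: of_real_inverse)
  have "(\<lambda>k. complex_of_real (inverse (Suc k))) \<longlonglongrightarrow> 0"
    using tendsto_of_real[OF LIMSEQ_inverse_real_of_nat] by (simp only: of_real_0)
  then have "c \<longlonglongrightarrow> 0"
    unfolding c_def by (rule tendsto_mult_right_zero)
  define y where "y k = (w, a(l := c k), \<theta>)" for k
  have "(\<lambda>k. (a(l := c k)) j) \<longlonglongrightarrow> a j" for j
    using \<open>c \<longlonglongrightarrow> 0\<close> a_l by (cases "j = l") auto
  then have "y \<longlonglongrightarrow> (w, a, \<theta>)"
    unfolding y_def by (intro tendsto_Pair tendsto_const) (simp add: tendsto_fun_iff)
  moreover have "(w, a, \<theta>) \<in> T" using x T by blast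
  ultimately have "\<forall>\<^sub>F k in sequentially. y k \<in> T" using T(1) topological_tendstoD by blast
  then obtain k where "y k \<in> T" using eventually_happens'[OF sequentially_bot] by blast
  moreover have "y k \<in> ambient N"
    using x l Dint_subset_Dset by (auto simp: y_def Dset_def DD_def ambient_def)
  ultimately have "y k \<in> Dset N"
    using T Dint_subset_Dset by blast
  then show False
    using l c_imag[of k] by (auto simp: y_def Dset_def)
qed

lemma Dint_eq: "Dint N = {(w, a, \<theta>) \<in> Dset N. \<forall>l\<in>PN N. a l \<noteq> 0}"
proof
  have "openin (top_of_set (ambient N)) (\<Union>M\<in>Pow (PN N). ambient N \<inter> sector N M)"
    unfolding Int_UN_distrib[symmetric]
    by (intro openin_open_Int open_UN ballI open_sector) (auto intro: finite_subset)
  then show "{(w, a, \<theta>) \<in> Dset N. \<forall>l\<in>PN N. a l \<noteq> 0} \<subseteq> Dint N"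
    unfolding Dint_def Dset_nonzero_eq_Union_sectors[symmetric]
    by (intro interior_of_maximal) auto
  show "Dint N \<subseteq> {(w, a, \<theta>) \<in> Dset N. \<forall>l\<in>PN N. a l \<noteq> 0}"
    using Dint_nonzero Dint_subset_Dset by fast
qed

lemma DintL_eq_sector: "M \<subseteq> PN N \<Longrightarrow> DintL N M = ambient N \<inter> sector N M"
  unfolding DintL_def Dint_eq using Dset_nonzero_iff_sector by blast

lemma components_Dint: "components (Dint N) = DintL N ` Pow (PN N)"
proof (rule components_openin_unique)
  have sectors: "DintL N ` Pow (PN N) = (\<lambda>M. ambient N \<inter> sector N M) ` Pow (PN N)"
    using DintL_eq_sector by (intro image_cong) auto
  then show "\<Union>(DintL N ` Pow (PN N)) = Dint N"
    by (simp add: Dint_eq Dset_nonzero_eq_Union_sectors)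
  show "pairwise disjnt (DintL N ` Pow (PN N))"
    unfolding sectors pairwise_def disjnt_def using sectors_disjoint by blast
  fix C assume "C \<in> DintL N ` Pow (PN N)"
  then obtain M where M: "M \<subseteq> PN N" and C: "C = ambient N \<inter> sector N M"
    unfolding sectors by blast
  have "openin (top_of_set (ambient N)) C"
    unfolding C using M by (intro openin_open_Int open_sector) (auto intro: finite_subset)
  moreover have "C \<subseteq> Dint N" "Dint N \<subseteq> ambient N"
    using M C by (auto simp: Dint_eq Dset_nonzero_eq_Union_sectors)
  ultimately have "openin (top_of_set (Dint N)) C" by (rule openin_subset_trans[of "ambient N"])
  moreover have "connected C"
    unfolding C
    by (intro path_connected_imp_connected pt_convex_imp_path_connected pt_convex_sector)
  moreover have "C \<noteq> {}" unfolding C by (rule sector_nonempty[OF M])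
  ultimately show "openin (top_of_set (Dint N)) C \<and> connected C \<and> C \<noteq> {}" by blast
qed

lemma inj_on_DintL: "inj_on (DintL N) (Pow (PN N))"
proof (rule inj_onI)
  fix M M' assume "M \<in> Pow (PN N)" "M' \<in> Pow (PN N)" "DintL N M = DintL N M'"
  then have "ambient N \<inter> sector N M = ambient N \<inter> sector N M'"
    using DintL_eq_sector by auto
  then show "M = M'"
    using sector_nonempty[of M N] sectors_disjoint[of M N M'] \<open>M \<in> Pow (PN N)\<close> \<open>M' \<in> Pow (PN N)\<close>
    by blast
qed

theorem lemma5:
  fixes N :: nat and \<Lambda> :: "nat set"
  assumes "\<Lambda> \<subseteq> PN N"
  shows "(\<forall>(X :: nat \<Rightarrow> pt) x. (\<forall>n. X n \<in> DD N) \<longrightarrow> x \<in> Dset N \<longrightarrow> X \<longlonglongrightarrow> x \<longrightarrow>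
            (\<lambda>n. piL N \<Lambda> (X n)) \<longlonglongrightarrow> piL N \<Lambda> x)
       \<and> path_connected (Dset N)
       \<and> Tplus N \<subseteq> Dset N
       \<and> (N \<ge> 1 \<longrightarrow>
            Dint N = {(w,a,\<theta>) \<in> Dset N. \<forall>l \<in> PN N. a l \<noteq> 0}
          \<and> components (Dint N) = DintL N ` Pow (PN N)
          \<and> inj_on (DintL N) (Pow (PN N))
          \<and> card (components (Dint N)) = 2 ^ N
          \<and> (\<forall>M \<in> Pow (PN N). simply_connected (DintL N M)))"
proof -
  have "\<forall>(X :: nat \<Rightarrow> pt) x. (\<forall>n. X n \<in> DD N) \<longrightarrow> x \<in> Dset N \<longrightarrow> X \<longlonglongrightarrow> x \<longrightarrow>
      (\<lambda>n. piL N \<Lambda> (X n)) \<longlonglongrightarrow> piL N \<Lambda> x"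
    using tendsto_piL[OF assms] by blast
  moreover have "card (components (Dint N)) = 2 ^ N"
    unfolding components_Dint card_image[OF inj_on_DintL] by (simp add: card_Pow PN_def)
  moreover have "\<forall>M \<in> Pow (PN N). simply_connected (DintL N M)"
    using DintL_eq_sector pt_convex_imp_simply_connected[OF pt_convex_sector] by simp
  ultimately show ?thesis
    using path_connected_Dset Tplus_subset_Dset Dint_eq components_Dint inj_on_DintL
    by (intro conjI impI) assumption+
qed

end
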